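(* Let $\tilde M=G/K$ be an irreducible Riemannian symmetric space with Cartan decomposition $\mathfrak g=\mathfrak k\oplus\mathfrak p$, and let $\mathfrak a\subset\mathfrak p$ be a maximal abelian subspace with restricted root system $\Delta\subset\mathfrak a$. \begin{enumerate} \item[(a)] If $\beta,\gamma\in\Delta$ are neither proportional nor orthogonal, then $\tilde R(A,X_\beta)X_\gamma\neq0$ for all nonzero $X_\beta\in\mathfrak p_\beta$, $X_\gamma\in\mathfrak p_\gamma$ and all $A\in\mathfrak a$ with $\langle\beta,A\rangle\neq0$. \item[(b)] If $X,Y\in\mathfrak p$ satisfy $\tilde R(X,Z,W,Y)=0$ for all $Z,W\in\mathfrak p$, then $X=0$ or $Y=0$. \end{enumerate}
   Context: $\varepsilon=\pm1$ is the sign of the Einstein constant of $\tilde M$, $B$ is the Killing form of $\mathfrak g$, and $\mathfrak p\cong T_o\tilde M$ carries the inner product $\langle X,Y\rangle=-\varepsilon B(X,Y)$. The curvature is $\tilde R(X,Y)Z=-[[X,Y],Z]$ and $\tilde R(X,Y,Z,W)=\langle\tilde R(X,Y)Z,W\rangle$. For $\beta\in\mathfrak a$, $\mathfrak g_\beta=\{X\in\mathfrak g:[A,[A,X]]=-\varepsilon\langle\beta,A\rangle^2X\ \forall A\in\mathfrak a\}$; a restricted root is a nonzero $\beta\in\mathfrak a$ with $\mathfrak g_\beta\neq0$, and $\mathfrak p_\beta=\mathfrak g_\beta\cap\mathfrak p$ is its root space. *)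

theory Defs
  imports "HOL-Analysis.Analysis"
begin

text \<open>The Lie algebra g is modelled as real^'n with a bracket br.
  The symmetric space G/K is encoded by its orthogonal involutive Lie algebra
  (g, k, p, eps) where g = k + p is the Cartan decomposition.\<close>

definition lie_algebra :: "(real^'n \<Rightarrow> real^'n \<Rightarrow> real^'n) \<Rightarrow> bool" where
  "lie_algebra br \<longleftrightarrow> bilinear br \<and> (\<forall>X Y. br X Y = - br Y X)
     \<and> (\<forall>X Y Z. br X (br Y Z) + br Y (br Z X) + br Z (br X Y) = 0)"

definition killing :: "(real^'n \<Rightarrow> real^'n \<Rightarrow> real^'n) \<Rightarrow> real^'n \<Rightarrow> real^'n \<Rightarrow> real" where
  "killing br X Y = trace (matrix (\<lambda>Z. br X (br Y Z)))"

definition ip :: "(real^'n \<Rightarrow> real^'n \<Rightarrow> real^'n) \<Rightarrow> real \<Rightarrow> real^'n \<Rightarrow> real^'n \<Rightarrow> real" where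
  "ip br eps X Y = - eps * killing br X Y"

text \<open>Irreducible Riemannian symmetric space (of compact type if eps = 1, of
  noncompact type if eps = -1), given by its Cartan decomposition g = k + p:
  g semisimple (Killing form nondegenerate), k, p complementary subspaces with
  [k,k] in k, [k,p] in p, [p,p] in k, effectivity k = span [p,p],
  B negative definite on k, -eps B positive definite on p, and k acting
  irreducibly on p (p nonzero).\<close>
definition irred_symmetric ::
  "(real^'n \<Rightarrow> real^'n \<Rightarrow> real^'n) \<Rightarrow> (real^'n) set \<Rightarrow> (real^'n) set \<Rightarrow> real \<Rightarrow> bool" where
  "irred_symmetric br k p eps \<longleftrightarrow>
     lie_algebra br \<and> (eps = 1 \<or> eps = -1) \<and>
     (\<forall>X. (\<forall>Y. killing br X Y = 0) \<longrightarrow> X = 0) \<and>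
     subspace k \<and> subspace p \<and> k \<inter> p = {0} \<and> k + p = UNIV \<and>
     (\<forall>X\<in>k. \<forall>Y\<in>k. br X Y \<in> k) \<and>
     (\<forall>X\<in>k. \<forall>Y\<in>p. br X Y \<in> p) \<and>
     (\<forall>X\<in>p. \<forall>Y\<in>p. br X Y \<in> k) \<and>
     k = span {br X Y | X Y. X \<in> p \<and> Y \<in> p} \<and>
     (\<forall>X\<in>k. X \<noteq> 0 \<longrightarrow> killing br X X < 0) \<and>
     (\<forall>X\<in>p. X \<noteq> 0 \<longrightarrow> ip br eps X X > 0) \<and>
     p \<noteq> {0} \<and>
     (\<forall>V. subspace V \<and> V \<subseteq> p \<and> (\<forall>X\<in>k. \<forall>Y\<in>V. br X Y \<in> V) \<longrightarrow> V = {0} \<or> V = p)"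

definition max_abelian ::
  "(real^'n \<Rightarrow> real^'n \<Rightarrow> real^'n) \<Rightarrow> (real^'n) set \<Rightarrow> (real^'n) set \<Rightarrow> bool" where
  "max_abelian br p a \<longleftrightarrow> subspace a \<and> a \<subseteq> p \<and> (\<forall>A\<in>a. \<forall>B\<in>a. br A B = 0) \<and>
     (\<forall>b. subspace b \<and> a \<subseteq> b \<and> b \<subseteq> p \<and> (\<forall>A\<in>b. \<forall>B\<in>b. br A B = 0) \<longrightarrow> b = a)"

definition gspace ::
  "(real^'n \<Rightarrow> real^'n \<Rightarrow> real^'n) \<Rightarrow> real \<Rightarrow> (real^'n) set \<Rightarrow> real^'n \<Rightarrow> (real^'n) set" where
  "gspace br eps a \<beta> = {X. \<forall>A\<in>a. br A (br A X) = (- eps * (ip br eps \<beta> A)^2) *\<^sub>R X}"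

definition pspace ::
  "(real^'n \<Rightarrow> real^'n \<Rightarrow> real^'n) \<Rightarrow> real \<Rightarrow> (real^'n) set \<Rightarrow> (real^'n) set \<Rightarrow> real^'n \<Rightarrow> (real^'n) set" where
  "pspace br eps p a \<beta> = gspace br eps a \<beta> \<inter> p"

definition restricted_roots ::
  "(real^'n \<Rightarrow> real^'n \<Rightarrow> real^'n) \<Rightarrow> real \<Rightarrow> (real^'n) set \<Rightarrow> (real^'n) set" where
  "restricted_roots br eps a = {\<beta>. \<beta> \<in> a \<and> \<beta> \<noteq> 0 \<and> gspace br eps a \<beta> \<noteq> {0}}"

definition curv :: "(real^'n \<Rightarrow> real^'n \<Rightarrow> real^'n) \<Rightarrow> real^'n \<Rightarrow> real^'n \<Rightarrow> real^'n \<Rightarrow> real^'n" where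
  "curv br X Y Z = - br (br X Y) Z"

definition curv4 :: "(real^'n \<Rightarrow> real^'n \<Rightarrow> real^'n) \<Rightarrow> real \<Rightarrow> real^'n \<Rightarrow> real^'n \<Rightarrow> real^'n \<Rightarrow> real^'n \<Rightarrow> real" where
  "curv4 br eps X Y Z W = ip br eps (curv br X Y Z) W"

end

theory Submission
  imports Defs
begin

text \<open>
  (a) Put \<open>T = [A, X\<^sub>\<beta>] \<in> k\<close>, nonzero since \<open>[A, T] = -\<epsilon> \<langle>\<beta>, A\<rangle>\<^sup>2 X\<^sub>\<beta>\<close>. If \<open>[T, X\<^sub>\<gamma>] = 0\<close>,
  bracketing with some \<open>A' \<in> a\<close> orthogonal to \<open>\<gamma>\<close> but not to \<open>\<beta>\<close> gives \<open>[X\<^sub>\<beta>, X\<^sub>\<gamma>] = 0\<close>.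
  Then \<open>H = [X\<^sub>\<beta>, T]\<close> centralizes \<open>a\<close>, so lies in \<open>a\<close>, and centralizes \<open>X\<^sub>\<gamma>\<close>, so
  \<open>\<langle>\<gamma>, H\<rangle> = 0\<close>. But by invariance \<open>B(\<gamma>, H) = B([\<gamma>, X\<^sub>\<beta>], T)\<close> is a nonzero multiple of
  \<open>B(T, T) \<noteq> 0\<close>.

  (b) If \<open>R(X, \<cdot>, \<cdot>, Y) = 0\<close>, i.e. \<open>B([X, Z], [W, Y]) = 0\<close> for all \<open>Z, W \<in> p\<close>, then
  definiteness of the Killing form on \<open>k\<close> and on \<open>p\<close> shows that \<open>X\<close> centralizes \<open>Y\<close> and
  \<open>[Y, g]\<close>, hence the Lie subalgebra \<open>A\<close> generated by them. Since \<open>ker (ad Y)\<^sup>2 = ker (ad Y)\<close>,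
  \<open>g = ker (ad Y) + im (ad Y)\<close>, which makes \<open>A\<close> an ideal; its centralizer in \<open>p\<close> is then
  \<open>k\<close>-invariant and contains \<open>X\<close>. By irreducibility either \<open>X = 0\<close> or \<open>[p, Y] = 0\<close>, and
  the latter forces \<open>ad Y = 0\<close>, so \<open>Y = 0\<close> by semisimplicity.
\<close>

lemma linear_kernel_plus_range:
  fixes f :: "'a::euclidean_space \<Rightarrow> 'a"
  assumes f: "linear f" and ker2: "\<And>w. f (f w) = 0 \<Longrightarrow> f w = 0"
  obtains u0 w where "u = u0 + f w" "f u0 = 0"
proof -
  have sub: "subspace (range f)"
    by (simp add: f linear_subspace_image)
  have "inj_on f (range f)"
    using ker2 by (auto simp: linear_inj_on_iff_eq_0[OF f sub])
  moreover have "span (range f) = range f"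
    using sub by (rule span_eq_iff[THEN iffD2])
  ultimately have "dim (f ` range f) = dim (range f)"
    by (metis dim_image_eq[OF f])
  then have "f ` range f = range f"
    using sub by (intro subspace_dim_equal) (auto simp: f linear_subspace_image)
  then obtain w where "f u = f (f w)"
    by (metis image_iff rangeI)
  then show thesis
    by (intro that[of "u - f w" w]) (simp_all add: linear_diff[OF f])
qed

lemma matrix_diff_fun: "matrix (\<lambda>v. f v - g v) = matrix f - matrix g"
  by (simp add: matrix_def vec_eq_iff)

locale real_lie_algebra =
  fixes br :: "real^'n \<Rightarrow> real^'n \<Rightarrow> real^'n"
  assumes lie_algebra: "lie_algebra br"
begin

lemma bilinear_br: "bilinear br"
  using lie_algebra by (simp add: lie_algebra_def)

lemma br_anticomm: "br X Y = - br Y X"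
  using lie_algebra unfolding lie_algebra_def by blast

lemma br_jacobi: "br X (br Y Z) + br Y (br Z X) + br Z (br X Y) = 0"
  using lie_algebra unfolding lie_algebra_def by blast

lemmas br_ladd = bilinear_ladd[OF bilinear_br]
  and br_radd = bilinear_radd[OF bilinear_br]
  and br_lmul = bilinear_lmul[OF bilinear_br]
  and br_rmul = bilinear_rmul[OF bilinear_br]
  and br_lneg = bilinear_lneg[OF bilinear_br]
  and br_rneg = bilinear_rneg[OF bilinear_br]
  and br_lsub = bilinear_lsub[OF bilinear_br]
  and br_rsub = bilinear_rsub[OF bilinear_br]
  and br_lzero[simp] = bilinear_lzero[OF bilinear_br]
  and br_rzero[simp] = bilinear_rzero[OF bilinear_br]

lemma br_self [simp]: "br X X = 0"
proof -
  have "(2::real) *\<^sub>R br X X = 0"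
    using br_anticomm[of X X] by (simp add: scaleR_2 eq_neg_iff_add_eq_0[symmetric])
  then show ?thesis
    by simp
qed

lemma linear_br: "linear (br X)"
  using bilinear_br by (simp add: bilinear_def)

lemma br_br_left: "br (br X Y) Z = br X (br Y Z) - br Y (br X Z)"
proof -
  have "br Z (br X Y) = br Y (br X Z) - br X (br Y Z)"
    using br_jacobi[of X Y Z] br_anticomm[of Z X] by (simp add: br_rneg algebra_simps)
  then show ?thesis
    using br_anticomm[of "br X Y" Z] by simp
qed

lemma killing_eq_sum: "killing br X Y = (\<Sum>i\<in>UNIV. br X (br Y (axis i 1)) $ i)"
  by (simp add: killing_def trace_def matrix_def)

lemma bilinear_killing: "bilinear (killing br)"
  by (simp add: bilinear_def linear_iff killing_eq_sum br_ladd br_radd br_lmul br_rmul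
      sum.distrib sum_distrib_left)

lemmas killing_lmul = bilinear_lmul[OF bilinear_killing]
  and killing_rmul = bilinear_rmul[OF bilinear_killing]
  and killing_lneg = bilinear_lneg[OF bilinear_killing]
  and killing_rneg = bilinear_rneg[OF bilinear_killing]
  and killing_lsub = bilinear_lsub[OF bilinear_killing]
  and killing_rsub = bilinear_rsub[OF bilinear_killing]
  and killing_lzero[simp] = bilinear_lzero[OF bilinear_killing]
  and killing_rzero[simp] = bilinear_rzero[OF bilinear_killing]

lemma matrix_br_br: "matrix (\<lambda>v. br X (br Y v)) = matrix (br X) ** matrix (br Y)"
  using matrix_compose[OF linear_br linear_br] by (simp add: o_def)

lemma matrix_br_br_br:
  "matrix (\<lambda>v. br X (br Y (br Z v))) = matrix (br X) ** matrix (br Y) ** matrix (br Z)"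
  using matrix_compose[OF linear_compose[OF linear_br[of Z] linear_br[of Y]] linear_br[of X]]
  by (simp add: o_def matrix_br_br matrix_mul_assoc)

lemma killing_commute: "killing br X Y = killing br Y X"
  unfolding killing_def matrix_br_br by (rule trace_mul_sym)

lemma killing_br_left: "killing br (br X Y) Z = killing br X (br Y Z)"
proof -
  let ?X = "matrix (br X)" and ?Y = "matrix (br Y)" and ?Z = "matrix (br Z)"
  have "trace (?Y ** ?X ** ?Z) = trace (?X ** ?Z ** ?Y)"
    by (simp add: matrix_mul_assoc[symmetric] trace_mul_sym[of ?Y])
  then show ?thesis
    unfolding killing_def br_br_left br_rsub matrix_diff_fun matrix_br_br_br trace_sub
    by simp
qed

lemma killing_br_skew: "killing br (br Y W) V = - killing br W (br Y V)"
  using br_anticomm[of Y W] by (simp add: killing_lneg killing_br_left)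

definition lie_hull :: "(real^'n) set \<Rightarrow> (real^'n) set" where
  "lie_hull S = \<Inter>{L. subspace L \<and> S \<subseteq> L \<and> (\<forall>x\<in>L. \<forall>y\<in>L. br x y \<in> L)}"

lemma subspace_lie_hull: "subspace (lie_hull S)"
  unfolding lie_hull_def by (rule subspace_Inter) blast

lemma lie_hull_superset: "S \<subseteq> lie_hull S"
  unfolding lie_hull_def by blast

lemma br_mem_lie_hull: "x \<in> lie_hull S \<Longrightarrow> y \<in> lie_hull S \<Longrightarrow> br x y \<in> lie_hull S"
  unfolding lie_hull_def by blast

lemma lie_hull_minimal:
  "subspace L \<Longrightarrow> S \<subseteq> L \<Longrightarrow> (\<And>x y. x \<in> L \<Longrightarrow> y \<in> L \<Longrightarrow> br x y \<in> L) \<Longrightarrow> lie_hull S \<subseteq> L"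
  unfolding lie_hull_def by blast

lemma br_lie_hull_eq_zero:
  assumes "\<And>s. s \<in> S \<Longrightarrow> br X s = 0" and "w \<in> lie_hull S"
  shows "br X w = 0"
proof -
  have "lie_hull S \<subseteq> {w. br X w = 0}"
  proof (rule lie_hull_minimal)
    show "subspace {w. br X w = 0}"
      by (rule linear_subspace_kernel[OF linear_br])
    fix x y assume "x \<in> {w. br X w = 0}" "y \<in> {w. br X w = 0}"
    then show "br x y \<in> {w. br X w = 0}"
      using br_br_left[of X x y] by simp
  qed (use assms(1) in blast)
  then show ?thesis
    using assms(2) by blast
qed

lemma subspace_idealizer: "subspace A \<Longrightarrow> subspace {z\<in>A. \<forall>u. br z u \<in> A}"
  unfolding subspace_def by (simp add: br_ladd br_lmul)

text \<open>Brackets with kernel elements of \<open>ad Y\<close> stay in the hull by the Jacobi identity,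
  brackets with image elements by construction.\<close>

lemma br_lie_hull_ad_mem:
  assumes split: "\<forall>u. \<exists>u0 w. u = u0 + br Y w \<and> br Y u0 = 0"
    and z: "z \<in> lie_hull (insert Y (range (br Y)))"
  shows "br z u \<in> lie_hull (insert Y (range (br Y)))"
proof -
  let ?A = "lie_hull (insert Y (range (br Y)))"
  have sub: "subspace ?A"
    by (rule subspace_lie_hull)
  have "insert Y (range (br Y)) \<subseteq> ?A"
    by (rule lie_hull_superset)
  then have Y: "Y \<in> ?A" and adY: "\<And>v. br Y v \<in> ?A"
    by auto
  have "?A \<subseteq> {z\<in>?A. \<forall>u. br z u \<in> ?A}"
  proof (rule lie_hull_minimal)
    show "subspace {z\<in>?A. \<forall>u. br z u \<in> ?A}"
      using sub by (rule subspace_idealizer)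
    have adY_ideal: "br (br Y v) u \<in> ?A" for v u
    proof -
      obtain u0 w where u: "u = u0 + br Y w" and u0: "br Y u0 = 0"
        using split by blast
      have "br (br Y v) u0 = br Y (br v u0)"
        using br_br_left[of Y v u0] u0 by simp
      then have "br (br Y v) u0 \<in> ?A"
        using adY by simp
      moreover have "br (br Y v) (br Y w) \<in> ?A"
        by (rule br_mem_lie_hull[OF adY adY])
      ultimately show ?thesis
        unfolding u br_radd by (rule subspace_add[OF sub])
    qed
    show "insert Y (range (br Y)) \<subseteq> {z\<in>?A. \<forall>u. br z u \<in> ?A}"
      using Y adY adY_ideal by blast
    fix x y assume x: "x \<in> {z\<in>?A. \<forall>u. br z u \<in> ?A}" and y: "y \<in> {z\<in>?A. \<forall>u. br z u \<in> ?A}"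
    have "br (br x y) u \<in> ?A" for u
    proof -
      have "br x (br y u) \<in> ?A" "br y (br x u) \<in> ?A"
        using x y br_mem_lie_hull by blast+
      then show ?thesis
        unfolding br_br_left by (rule subspace_diff[OF sub])
    qed
    then show "br x y \<in> {z\<in>?A. \<forall>u. br z u \<in> ?A}"
      using x y br_mem_lie_hull by simp
  qed
  then show ?thesis
    using z by blast
qed

lemma curv4_eq_killing: "curv4 br eps X Z W Y = eps * killing br (br X Z) (br W Y)"
  by (simp add: curv4_def ip_def curv_def killing_lneg killing_br_left)

end

locale cartan_decomposition = real_lie_algebra br for br :: "real^'n \<Rightarrow> real^'n \<Rightarrow> real^'n" +
  fixes k p :: "(real^'n) set"
  assumes subspace_p: "subspace p"
    and k_inter_p: "k \<inter> p = {0}" and k_plus_p: "k + p = UNIV"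
    and br_k_p: "X \<in> k \<Longrightarrow> Y \<in> p \<Longrightarrow> br X Y \<in> p"
    and br_p_p: "X \<in> p \<Longrightarrow> Y \<in> p \<Longrightarrow> br X Y \<in> k"
    and killing_definite_k: "X \<in> k \<Longrightarrow> killing br X X = 0 \<Longrightarrow> X = 0"
    and killing_definite_p: "X \<in> p \<Longrightarrow> killing br X X = 0 \<Longrightarrow> X = 0"
begin

lemma br_p_k: "X \<in> p \<Longrightarrow> Y \<in> k \<Longrightarrow> br X Y \<in> p"
  using br_k_p[of Y X] br_anticomm[of X Y] subspace_neg[OF subspace_p] by metis

lemma k_p_decomposition:
  obtains a b where "u = a + b" "a \<in> k" "b \<in> p"
  using k_plus_p by (metis UNIV_I set_plus_elim)

text \<open>\<open>ad Y\<close> swaps \<open>k\<close> and \<open>p\<close> and is skew for the Killing form, which is definite on both.\<close>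

lemma br_br_eq_zero_imp_br_eq_zero:
  assumes Y: "Y \<in> p" and YYw: "br Y (br Y w) = 0"
  shows "br Y w = 0"
proof -
  obtain a b where w: "w = a + b" and a: "a \<in> k" and b: "b \<in> p"
    by (rule k_p_decomposition)
  have Ya: "br Y a \<in> p" and Yb: "br Y b \<in> k"
    using br_p_k[OF Y a] br_p_p[OF Y b] .
  have YYa: "br Y (br Y a) \<in> k" and YYb: "br Y (br Y b) \<in> p"
    using br_p_p[OF Y Ya] br_p_k[OF Y Yb] .
  have sum: "br Y (br Y a) = - br Y (br Y b)"
    using YYw by (simp add: w br_radd eq_neg_iff_add_eq_0)
  then have "br Y (br Y a) \<in> k \<inter> p"
    using YYa YYb subspace_neg[OF subspace_p] by simp
  then have "br Y (br Y a) = 0" and "br Y (br Y b) = 0"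
    using k_inter_p sum by auto
  then have "killing br (br Y a) (br Y a) = 0" and "killing br (br Y b) (br Y b) = 0"
    by (simp_all add: killing_br_skew)
  then show ?thesis
    using killing_definite_p[OF Ya] killing_definite_k[OF Yb] by (simp add: w br_radd)
qed

lemma killing_br_br_swap: "killing br (br X Z) (br W Y) = killing br (br Y W) (br Z X)"
  using killing_commute[of "br X Z" "br W Y"] br_anticomm[of X Z] br_anticomm[of W Y]
  by (simp add: killing_lneg killing_rneg)

lemma br_br_eq_zero_if_killing_vanishes:
  assumes X: "X \<in> p" and Y: "Y \<in> p" and W: "W \<in> p"
    and vanish: "\<forall>Z\<in>p. \<forall>W\<in>p. killing br (br X Z) (br W Y) = 0"
  shows "br X (br W Y) = 0"
proof -
  let ?V = "br X (br W Y)"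
  have V: "?V \<in> p"
    using br_p_k[OF X br_p_p[OF W Y]] .
  have "killing br ?V ?V = - killing br (br X ?V) (br W Y)"
    by (simp add: killing_br_skew)
  also have "\<dots> = 0"
    using vanish V W by simp
  finally show ?thesis
    using killing_definite_p[OF V] by simp
qed

lemma br_eq_zero_if_killing_vanishes:
  assumes X: "X \<in> p" and Y: "Y \<in> p"
    and vanish: "\<forall>Z\<in>p. \<forall>W\<in>p. killing br (br X Z) (br W Y) = 0"
  shows "br X Y = 0" and "br X (br Y u) = 0"
proof -
  have XWY: "br X (br W Y) = 0" if "W \<in> p" for W
    using br_br_eq_zero_if_killing_vanishes[OF X Y that vanish] .
  have "\<forall>Z\<in>p. \<forall>W\<in>p. killing br (br Y Z) (br W X) = 0"
    using vanish by (simp add: killing_br_br_swap)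
  then have "br Y (br Y X) = 0"
    using br_br_eq_zero_if_killing_vanishes[OF Y X Y] by simp
  then show XY: "br X Y = 0"
    using br_br_eq_zero_imp_br_eq_zero[OF Y] br_anticomm[of X Y] by simp
  have XTY: "br X (br T Y) = 0" if T: "T \<in> k" for T
  proof (rule br_br_eq_zero_imp_br_eq_zero[OF X])
    have "br (br T X) Y = - br X (br T Y)"
      using br_br_left[of T X Y] XY br_anticomm[of "br T X" Y] by (simp add: br_rneg)
    then show "br X (br X (br T Y)) = 0"
      using XWY[OF br_k_p[OF T X]] by (simp add: br_rneg)
  qed
  obtain a b where "u = a + b" "a \<in> k" "b \<in> p"
    by (rule k_p_decomposition)
  then show "br X (br Y u) = 0"
    using XTY XWY br_anticomm[of Y a] br_anticomm[of Y b] by (simp add: br_radd br_rneg br_rsub)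
qed

end

locale irreducible_cartan_decomposition = cartan_decomposition br k p
  for br :: "real^'n \<Rightarrow> real^'n \<Rightarrow> real^'n" and k p +
  assumes killing_nondegenerate: "(\<And>Y. killing br X Y = 0) \<Longrightarrow> X = 0"
    and irreducible:
      "subspace V \<Longrightarrow> V \<subseteq> p \<Longrightarrow> (\<And>T v. T \<in> k \<Longrightarrow> v \<in> V \<Longrightarrow> br T v \<in> V) \<Longrightarrow> V = {0} \<or> V = p"
begin

lemma eq_zero_if_centralizes_p:
  assumes Y: "Y \<in> p" and centralizes: "\<And>v. v \<in> p \<Longrightarrow> br v Y = 0"
  shows "Y = 0"
proof (rule killing_nondegenerate)
  have "br Y u = 0" for u
  proof (rule br_br_eq_zero_imp_br_eq_zero[OF Y])
    obtain a b where "u = a + b" "a \<in> k" "b \<in> p"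
      by (rule k_p_decomposition)
    then show "br Y (br Y u) = 0"
      using centralizes br_p_k[OF Y] br_anticomm[of Y] by (simp add: br_radd)
  qed
  then show "killing br Y Z = 0" for Z
    by (simp add: killing_eq_sum)
qed

lemma centralizer_of_ideal_cases:
  assumes I: "subspace I" and ideal: "\<And>w u. w \<in> I \<Longrightarrow> br w u \<in> I"
  shows "{v\<in>p. \<forall>w\<in>I. br v w = 0} = {0} \<or> {v\<in>p. \<forall>w\<in>I. br v w = 0} = p"
proof (rule irreducible)
  show "subspace {v\<in>p. \<forall>w\<in>I. br v w = 0}"
    using subspace_p unfolding subspace_def by (simp add: br_ladd br_lmul)
  fix T v assume T: "T \<in> k" and v: "v \<in> {v\<in>p. \<forall>w\<in>I. br v w = 0}"
  have "br (br T v) w = 0" if "w \<in> I" for w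
  proof -
    have "br T w \<in> I"
      using ideal[OF that, of T] br_anticomm[of T w] subspace_neg[OF I] by simp
    then show ?thesis
      using v that br_br_left[of T v w] by simp
  qed
  then show "br T v \<in> {v\<in>p. \<forall>w\<in>I. br v w = 0}"
    using br_k_p[OF T] v by simp
qed simp

theorem killing_br_br_vanishes_imp_zero:
  assumes X: "X \<in> p" and Y: "Y \<in> p"
    and vanish: "\<forall>Z\<in>p. \<forall>W\<in>p. killing br (br X Z) (br W Y) = 0"
  shows "X = 0 \<or> Y = 0"
proof -
  let ?A = "lie_hull (insert Y (range (br Y)))"
  have "\<forall>u. \<exists>u0 w. u = u0 + br Y w \<and> br Y u0 = 0"
    using linear_kernel_plus_range[OF linear_br br_br_eq_zero_imp_br_eq_zero[OF Y]] by metis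
  then have "\<And>w u. w \<in> ?A \<Longrightarrow> br w u \<in> ?A"
    by (rule br_lie_hull_ad_mem)
  then have cases: "{v\<in>p. \<forall>w\<in>?A. br v w = 0} = {0} \<or> {v\<in>p. \<forall>w\<in>?A. br v w = 0} = p"
    using centralizer_of_ideal_cases[OF subspace_lie_hull] by blast
  have "\<And>s. s \<in> insert Y (range (br Y)) \<Longrightarrow> br X s = 0"
    using br_eq_zero_if_killing_vanishes[OF X Y vanish] by blast
  then have "X \<in> {v\<in>p. \<forall>w\<in>?A. br v w = 0}"
    using X br_lie_hull_eq_zero by blast
  moreover have "Y \<in> ?A"
    using lie_hull_superset by blast
  ultimately show ?thesis
    using cases eq_zero_if_centralizes_p[OF Y] by blast
qed

end

locale max_abelian_subspace = cartan_decomposition br k p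
  for br :: "real^'n \<Rightarrow> real^'n \<Rightarrow> real^'n" and k p +
  fixes a :: "(real^'n) set" and eps :: real
  assumes max_abelian: "max_abelian br p a" and eps_nonzero: "eps \<noteq> 0"
begin

lemma subspace_a: "subspace a"
  using max_abelian by (simp add: max_abelian_def)

lemma a_subset_p: "A \<in> a \<Longrightarrow> A \<in> p"
  using max_abelian by (auto simp: max_abelian_def)

lemma br_a_a: "A \<in> a \<Longrightarrow> B \<in> a \<Longrightarrow> br A B = 0"
  using max_abelian by (simp add: max_abelian_def)

lemma max_abelian_maximal:
  "subspace B \<Longrightarrow> a \<subseteq> B \<Longrightarrow> B \<subseteq> p \<Longrightarrow> (\<And>X Y. X \<in> B \<Longrightarrow> Y \<in> B \<Longrightarrow> br X Y = 0) \<Longrightarrow> B = a"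
  using max_abelian unfolding max_abelian_def by blast

lemma mem_a_if_centralizes_a:
  assumes H: "H \<in> p" and centralizes: "\<And>A. A \<in> a \<Longrightarrow> br A H = 0"
  shows "H \<in> a"
proof -
  let ?B = "span (insert H a)"
  have B: "x \<in> ?B \<longleftrightarrow> (\<exists>c. x - c *\<^sub>R H \<in> a)" for x
    using real_vector.span_insert[of H a] span_eq_iff[THEN iffD2, OF subspace_a] by simp
  have "?B = a"
  proof (rule max_abelian_maximal)
    show "subspace ?B"
      by (rule subspace_span)
    show "a \<subseteq> ?B"
      by (meson span_superset subset_insertI subset_trans)
    have "?B \<subseteq> span p"
      using H a_subset_p by (intro span_mono) blast
    then show "?B \<subseteq> p"
      using span_eq_iff[THEN iffD2, OF subspace_p] by simp
    fix x y assume x: "x \<in> ?B" and y: "y \<in> ?B"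
    obtain c where c: "x - c *\<^sub>R H \<in> a"
      using B[of x] x by blast
    obtain d where d: "y - d *\<^sub>R H \<in> a"
      using B[of y] y by blast
    have "br (x - c *\<^sub>R H) (y - d *\<^sub>R H) = 0"
      using br_a_a[OF c d] .
    moreover have "br (x - c *\<^sub>R H) H = 0"
      using centralizes[OF c] .
    moreover have "br H (y - d *\<^sub>R H) = 0"
      using centralizes[OF d] br_anticomm[of H "y - d *\<^sub>R H"] by simp
    ultimately show "br x y = 0"
      by (simp add: br_lsub br_rsub br_lmul br_rmul)
  qed
  moreover have "H \<in> ?B"
    by (simp add: span_base)
  ultimately show ?thesis
    by simp
qed

lemma ip_definite: "X \<in> p \<Longrightarrow> ip br eps X X = 0 \<Longrightarrow> X = 0"
  using killing_definite_p eps_nonzero by (simp add: ip_def)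

lemma pspace_subset_p: "X \<in> pspace br eps p a \<beta> \<Longrightarrow> X \<in> p"
  by (simp add: pspace_def)

lemma br_br_pspace:
  "X \<in> pspace br eps p a \<beta> \<Longrightarrow> A \<in> a \<Longrightarrow> br A (br A X) = (- eps * (ip br eps \<beta> A)^2) *\<^sub>R X"
  by (simp add: pspace_def gspace_def)

lemma br_pspace_eq_zero:
  assumes X: "X \<in> pspace br eps p a \<beta>" and A: "A \<in> a" and orth: "ip br eps \<beta> A = 0"
  shows "br A X = 0"
  using br_br_eq_zero_imp_br_eq_zero[OF a_subset_p[OF A]] br_br_pspace[OF X A] orth by simp

lemma br_pspace_proportional:
  assumes X: "X \<in> pspace br eps p a \<beta>" and A: "A \<in> a" and A': "A' \<in> a"
  shows "ip br eps \<beta> A *\<^sub>R br A' X = ip br eps \<beta> A' *\<^sub>R br A X"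
proof -
  let ?A'' = "ip br eps \<beta> A *\<^sub>R A' - ip br eps \<beta> A' *\<^sub>R A"
  have "?A'' \<in> a"
    using subspace_diff[OF subspace_a subspace_scale subspace_scale, OF subspace_a A' subspace_a A] .
  moreover have "ip br eps \<beta> ?A'' = 0"
    by (simp add: ip_def killing_rsub killing_rmul algebra_simps)
  ultimately have "br ?A'' X = 0"
    using br_pspace_eq_zero[OF X] by blast
  then show ?thesis
    by (simp add: br_lsub br_lmul)
qed

lemma br_br_pspace_mixed:
  assumes X: "X \<in> pspace br eps p a \<beta>" and A: "A \<in> a" and A': "A' \<in> a"
  shows "br A' (br A X) = (- eps * ip br eps \<beta> A * ip br eps \<beta> A') *\<^sub>R X"
proof (cases "ip br eps \<beta> A = 0")
  case True
  then show ?thesis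
    using br_pspace_eq_zero[OF X A] by simp
next
  case False
  let ?b = "ip br eps \<beta> A" and ?b' = "ip br eps \<beta> A'"
  have "?b *\<^sub>R br A' (br A X) = br A (?b *\<^sub>R br A' X)"
    using br_br_left[of A' A X] br_a_a[OF A' A] by (simp add: br_rmul)
  also have "\<dots> = ?b' *\<^sub>R br A (br A X)"
    by (simp add: br_pspace_proportional[OF X A A'] br_rmul)
  also have "\<dots> = ?b *\<^sub>R ((- eps * ?b * ?b') *\<^sub>R X)"
    by (simp add: br_br_pspace[OF X A] power2_eq_square)
  finally show ?thesis
    using False by (metis scaleR_cancel_left)
qed

lemma br_pspace_br_mem_a:
  assumes X: "X \<in> pspace br eps p a \<beta>" and A: "A \<in> a" and b: "ip br eps \<beta> A \<noteq> 0"
  shows "br X (br A X) \<in> a"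
proof (rule mem_a_if_centralizes_a)
  have X_p: "X \<in> p"
    using pspace_subset_p[OF X] .
  show "br X (br A X) \<in> p"
    using br_p_k[OF X_p br_p_p[OF a_subset_p[OF A] X_p]] .
  fix A' assume A': "A' \<in> a"
  have "br A' X = inverse (ip br eps \<beta> A) *\<^sub>R (ip br eps \<beta> A *\<^sub>R br A' X)"
    using b by simp
  also have "\<dots> = (inverse (ip br eps \<beta> A) * ip br eps \<beta> A') *\<^sub>R br A X"
    by (simp add: br_pspace_proportional[OF X A A'])
  finally have "br (br A' X) (br A X) = 0"
    by (simp add: br_lmul)
  moreover have "br X (br A' (br A X)) = 0"
    by (simp add: br_br_pspace_mixed[OF X A A'] br_rmul br_rneg)
  ultimately show "br A' (br X (br A X)) = 0"
    using br_br_left[of A' X "br A X"] by simp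
qed

lemma exists_a_orthogonal:
  assumes \<beta>: "\<beta> \<in> a" and \<gamma>: "\<gamma> \<in> a"
    and not_proportional: "\<nexists>c. \<gamma> = c *\<^sub>R \<beta>" and \<beta>\<gamma>: "ip br eps \<beta> \<gamma> \<noteq> 0"
  obtains A' where "A' \<in> a" "ip br eps \<gamma> A' = 0" "ip br eps \<beta> A' \<noteq> 0"
proof
  let ?A' = "ip br eps \<gamma> \<gamma> *\<^sub>R \<beta> - ip br eps \<beta> \<gamma> *\<^sub>R \<gamma>"
  show A': "?A' \<in> a"
    using subspace_diff[OF subspace_a subspace_scale subspace_scale, OF subspace_a \<beta> subspace_a \<gamma>] .
  show \<gamma>A': "ip br eps \<gamma> ?A' = 0"
    using killing_commute[of \<gamma> \<beta>] by (simp add: ip_def killing_rsub killing_rmul)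
  show "ip br eps \<beta> ?A' \<noteq> 0"
  proof
    assume \<beta>A': "ip br eps \<beta> ?A' = 0"
    have "ip br eps ?A' ?A' = ip br eps \<gamma> \<gamma> * ip br eps \<beta> ?A' - ip br eps \<beta> \<gamma> * ip br eps \<gamma> ?A'"
      by (simp add: ip_def killing_lsub killing_lmul algebra_simps)
    then have "?A' = 0"
      using ip_definite[OF a_subset_p[OF A']] \<beta>A' \<gamma>A' by simp
    then have "\<gamma> = (ip br eps \<gamma> \<gamma> / ip br eps \<beta> \<gamma>) *\<^sub>R \<beta>"
      using \<beta>\<gamma> by (simp add: eq_vector_fraction_iff)
    then show False
      using not_proportional by blast
  qed
qed

theorem curv_pspace_ne_zero:
  assumes \<beta>: "\<beta> \<in> a" and \<gamma>: "\<gamma> \<in> a"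
    and not_proportional: "\<nexists>c. \<gamma> = c *\<^sub>R \<beta>" and \<beta>\<gamma>: "ip br eps \<beta> \<gamma> \<noteq> 0"
    and X\<beta>: "X\<^sub>\<beta> \<in> pspace br eps p a \<beta>" "X\<^sub>\<beta> \<noteq> 0"
    and X\<gamma>: "X\<^sub>\<gamma> \<in> pspace br eps p a \<gamma>" "X\<^sub>\<gamma> \<noteq> 0"
    and A: "A \<in> a" and \<beta>A: "ip br eps \<beta> A \<noteq> 0"
  shows "curv br A X\<^sub>\<beta> X\<^sub>\<gamma> \<noteq> 0"
proof
  let ?T = "br A X\<^sub>\<beta>" and ?b = "ip br eps \<beta> A"
  assume "curv br A X\<^sub>\<beta> X\<^sub>\<gamma> = 0"
  then have TX\<gamma>: "br ?T X\<^sub>\<gamma> = 0"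
    by (simp add: curv_def)
  have T: "?T \<in> k"
    using br_p_p[OF a_subset_p[OF A] pspace_subset_p[OF X\<beta>(1)]] .
  have "br A ?T \<noteq> 0"
    using br_br_pspace[OF X\<beta>(1) A] eps_nonzero \<beta>A X\<beta>(2) by simp
  then have "killing br ?T ?T \<noteq> 0"
    using killing_definite_k[OF T] by force
  obtain A' where A': "A' \<in> a" "ip br eps \<gamma> A' = 0" "ip br eps \<beta> A' \<noteq> 0"
    using exists_a_orthogonal[OF \<beta> \<gamma> not_proportional \<beta>\<gamma>] .
  have "br (br A' ?T) X\<^sub>\<gamma> = 0"
    using br_br_left[of A' ?T X\<^sub>\<gamma>] TX\<gamma> br_pspace_eq_zero[OF X\<gamma>(1) A'(1,2)] by simp
  then have X\<beta>X\<gamma>: "br X\<^sub>\<beta> X\<^sub>\<gamma> = 0"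
    using br_br_pspace_mixed[OF X\<beta>(1) A A'(1)] eps_nonzero \<beta>A A'(3) by (simp add: br_lmul br_lneg)
  let ?H = "br X\<^sub>\<beta> ?T"
  have "br ?H X\<^sub>\<gamma> = 0"
    using br_br_left[of X\<^sub>\<beta> ?T X\<^sub>\<gamma>] TX\<gamma> X\<beta>X\<gamma> by simp
  then have "ip br eps \<gamma> ?H = 0"
    using br_br_pspace[OF X\<gamma>(1) br_pspace_br_mem_a[OF X\<beta>(1) A \<beta>A]] eps_nonzero X\<gamma>(2) by simp
  moreover have "?b * killing br \<gamma> ?H = ip br eps \<beta> \<gamma> * killing br ?T ?T"
    using br_pspace_proportional[OF X\<beta>(1) A \<gamma>] killing_br_left[of \<gamma> X\<^sub>\<beta> ?T]
    by (metis killing_lmul real_scaleR_def)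
  ultimately show False
    using eps_nonzero \<beta>\<gamma> \<open>killing br ?T ?T \<noteq> 0\<close> by (simp add: ip_def)
qed

end

lemma irred_symmetric_imp_irreducible_cartan_decomposition:
  assumes "irred_symmetric br k p eps"
  shows "irreducible_cartan_decomposition br k p"
proof -
  note S = assms[unfolded irred_symmetric_def]
  have "lie_algebra br" "subspace p" "k \<inter> p = {0}" "k + p = UNIV"
    using S by - (elim conjE, assumption)+
  moreover have "\<forall>X\<in>k. \<forall>Y\<in>p. br X Y \<in> p" "\<forall>X\<in>p. \<forall>Y\<in>p. br X Y \<in> k"
    using S by - (elim conjE, assumption)+
  moreover have "\<forall>X\<in>k. X \<noteq> 0 \<longrightarrow> killing br X X < 0" "\<forall>X\<in>p. X \<noteq> 0 \<longrightarrow> ip br eps X X > 0"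
    using S by - (elim conjE, assumption)+
  moreover have "\<forall>X. (\<forall>Y. killing br X Y = 0) \<longrightarrow> X = 0"
    "\<forall>V. subspace V \<and> V \<subseteq> p \<and> (\<forall>X\<in>k. \<forall>Y\<in>V. br X Y \<in> V) \<longrightarrow> V = {0} \<or> V = p"
    using S by - (elim conjE, assumption)+
  ultimately show ?thesis
    by unfold_locales (auto simp: ip_def)
qed

theorem lemma2p1:
  fixes br :: "real^'n \<Rightarrow> real^'n \<Rightarrow> real^'n"
    and k p a :: "(real^'n) set" and eps :: real
  assumes "irred_symmetric br k p eps"
    and "max_abelian br p a"
  shows "(\<forall>\<beta>\<in>restricted_roots br eps a. \<forall>\<gamma>\<in>restricted_roots br eps a.
            (\<nexists>c. \<gamma> = c *\<^sub>R \<beta>) \<and> ip br eps \<beta> \<gamma> \<noteq> 0 \<longrightarrow>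
            (\<forall>X\<^sub>\<beta>\<in>pspace br eps p a \<beta>. \<forall>X\<^sub>\<gamma>\<in>pspace br eps p a \<gamma>. \<forall>A\<in>a.
               X\<^sub>\<beta> \<noteq> 0 \<and> X\<^sub>\<gamma> \<noteq> 0 \<and> ip br eps \<beta> A \<noteq> 0 \<longrightarrow> curv br A X\<^sub>\<beta> X\<^sub>\<gamma> \<noteq> 0))
       \<and> (\<forall>X\<in>p. \<forall>Y\<in>p. (\<forall>Z\<in>p. \<forall>W\<in>p. curv4 br eps X Z W Y = 0) \<longrightarrow> X = 0 \<or> Y = 0)"
proof -
  interpret irreducible_cartan_decomposition br k p
    using irred_symmetric_imp_irreducible_cartan_decomposition[OF assms(1)] .
  have eps: "eps \<noteq> 0"
    using assms(1) unfolding irred_symmetric_def by (elim conjE) auto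
  interpret max_abelian_subspace br k p a eps
    using cartan_decomposition_axioms assms(2) eps
    by (simp add: max_abelian_subspace_def max_abelian_subspace_axioms_def)
  show ?thesis
  proof (intro conjI ballI impI)
    fix \<beta> \<gamma> X\<^sub>\<beta> X\<^sub>\<gamma> A
    assume "\<beta> \<in> restricted_roots br eps a" "\<gamma> \<in> restricted_roots br eps a"
      and "(\<nexists>c. \<gamma> = c *\<^sub>R \<beta>) \<and> ip br eps \<beta> \<gamma> \<noteq> 0"
      and "X\<^sub>\<beta> \<in> pspace br eps p a \<beta>" "X\<^sub>\<gamma> \<in> pspace br eps p a \<gamma>" "A \<in> a"
      and "X\<^sub>\<beta> \<noteq> 0 \<and> X\<^sub>\<gamma> \<noteq> 0 \<and> ip br eps \<beta> A \<noteq> 0"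
    moreover from this(1,2) have "\<beta> \<in> a" "\<gamma> \<in> a"
      by (simp_all add: restricted_roots_def)
    ultimately show "curv br A X\<^sub>\<beta> X\<^sub>\<gamma> \<noteq> 0"
      using curv_pspace_ne_zero by blast
  next
    fix X Y assume "X \<in> p" "Y \<in> p" "\<forall>Z\<in>p. \<forall>W\<in>p. curv4 br eps X Z W Y = 0"
    then show "X = 0 \<or> Y = 0"
      using killing_br_br_vanishes_imp_zero eps by (simp add: curv4_eq_killing)
  qed
qed

end
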